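(* Let $f$ be a locally integrable function and $\mu$ a (positive) measure on $\mathbb{R}_+=(0,\infty)$, and let $\sigma\in\mathbb{R}$ be such that $\int_0^\infty x^{\sigma-1}|f(x)|\,dx<\infty$ and $\int_0^\infty x^{-\sigma}\,d\mu(x)<\infty$. Assume that the integral $\int_{\sigma-i\infty}^{\sigma+i\infty}\mathcal{M}f(s)\,\mathcal{M}\mu(1-s)\,ds$ converges at least conditionally, that $x^\sigma f(x)$ is bounded, and that $f$ is continuous at $\mu$-almost every point. Then \[ \int_0^\infty f(x)\,d\mu(x)=\frac{1}{2\pi i}\int_{\sigma-i\infty}^{\sigma+i\infty}\mathcal{M}f(s)\,\mathcal{M}\mu(1-s)\,ds. \]
   Context: Mellin transforms: $\mathcal{M}f(s)=\int_0^\infty f(x)x^{s-1}\,dx$ and $\mathcal{M}\mu(s)=\int_0^\infty x^{s-1}\,d\mu(x)$, for those complex $s$ where the integrals converge absolutely. A line integral $\int_{\sigma-i\infty}^{\sigma+i\infty}g(s)\,ds$ converges conditionally if $g$ is locally integrable on the line and $\lim_{A\to\infty}\int_{\sigma-iA}^{\sigma+iA}g(s)\,ds$ exists and is finite; the integral is then defined as this limit. *)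

theory Defs
  imports "HOL-Analysis.Analysis"
begin

definition mellin :: "(real \<Rightarrow> complex) \<Rightarrow> complex \<Rightarrow> complex" where
  "mellin f s = (LINT x:{0<..}|lebesgue. (complex_of_real x) powr (s - 1) * f x)"

definition mellin_measure :: "real measure \<Rightarrow> complex \<Rightarrow> complex" where
  "mellin_measure \<mu> s = (LINT x:{0<..}|\<mu>. (complex_of_real x) powr (s - 1))"

text \<open>Integrand of the line integral along Re s = sigma, parametrised s = sigma + i t,
  ds = i dt.\<close>
definition mellin_line_integrand :: "(real \<Rightarrow> complex) \<Rightarrow> real measure \<Rightarrow> real \<Rightarrow> real \<Rightarrow> complex" where
  "mellin_line_integrand f \<mu> \<sigma> t =
     \<i> * (mellin f (complex_of_real \<sigma> + \<i> * complex_of_real t) *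
          mellin_measure \<mu> (1 - (complex_of_real \<sigma> + \<i> * complex_of_real t)))"

end

theory Submission
  imports Defs "HOL-Probability.Probability" "HOL-Real_Asymp.Real_Asymp"
begin

text \<open>The substitution x = exp u turns Mf(sigma + it) into the Fourier transform of
  g(u) = exp(sigma u) f(exp u), which is bounded and integrable, and Mmu(1 - sigma - it) into the
  Fourier transform at -t of the finite measure rho = x^(-sigma) dmu(x) transported by ln.
  The line integral is only conditionally convergent, so we weight it by exp(-(t/T)^2/2):
  this weight is the average of the indicators of [-rT, rT] under the Rayleigh distribution
  in r, hence the weighted integrals still tend to L as T tends to infinity.  With the weight
  Fubini applies, and the weighted integral becomes 2 pi i times the rho-integral of g smoothed
  by a Gaussian of width 1/T and evaluated at ln y.  Since g is bounded and continuous at ln y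
  for mu-almost every y, dominated convergence identifies the limit with 2 pi i times the
  integral of f over mu.\<close>

section \<open>Gaussian smoothing and the Fourier transform\<close>

lemma gaussian_fourier_transform:
  fixes T x :: real
  assumes T: "T > 0"
  shows "integrable lborel (\<lambda>t. exp (-((t/T)^2)/2) *\<^sub>R iexp (t * x))"
    and "(LINT t|lborel. exp (-((t/T)^2)/2) *\<^sub>R iexp (t * x))
       = complex_of_real (T * sqrt (2 * pi) * exp (-((T * x)^2)/2))"
proof -
  have int_normal: "integrable lborel (\<lambda>s. std_normal_density s *\<^sub>R iexp (s * a))" for a
  proof -
    interpret real_distribution std_normal_distribution by (rule real_dist_normal_dist)
    have "integrable std_normal_distribution (\<lambda>s. iexp (s * a))"
      by (rule integrable_const_bound[where B=1]) auto
    then show ?thesis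
      by (subst (asm) integrable_density) (auto simp: normal_density_nonneg)
  qed
  have char_normal: "(LINT s|lborel. std_normal_density s *\<^sub>R iexp (a * s)) = exp (-(a^2)/2)" for a
  proof -
    have "char std_normal_distribution a = exp (-(a^2)/2)"
      by (simp add: char_std_normal_distribution)
    then show ?thesis
      unfolding char_def by (subst (asm) integral_density) (auto simp: normal_density_nonneg)
  qed
  have rescale: "exp (-(((T * s)/T)^2)/2) *\<^sub>R iexp ((T * s) * x)
      = sqrt (2 * pi) *\<^sub>R (std_normal_density s *\<^sub>R iexp (s * (T * x)))" for s
    using T by (simp add: std_normal_density_def mult_ac)
  have "integrable lborel (\<lambda>s. exp (-(((T * s)/T)^2)/2) *\<^sub>R iexp ((T * s) * x))"
    unfolding rescale using int_normal[of "T * x", THEN integrable_scaleR_right] by simp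
  then show "integrable lborel (\<lambda>t. exp (-((t/T)^2)/2) *\<^sub>R iexp (t * x))"
    using lborel_integrable_real_affine_iff[of T "\<lambda>t. exp (-((t/T)^2)/2) *\<^sub>R iexp (t * x)" 0] T
    by simp
  have "(LINT t|lborel. exp (-((t/T)^2)/2) *\<^sub>R iexp (t * x))
      = \<bar>T\<bar> *\<^sub>R (LINT s|lborel. exp (-(((T * s)/T)^2)/2) *\<^sub>R iexp ((T * s) * x))"
    using lborel_integral_real_affine[of T "\<lambda>t. exp (-((t/T)^2)/2) *\<^sub>R iexp (t * x)" 0] T by simp
  also have "\<dots> = T *\<^sub>R (sqrt (2 * pi) *\<^sub>R (LINT s|lborel. std_normal_density s *\<^sub>R iexp ((T * x) * s)))"
    unfolding rescale integral_scaleR_right abs_of_pos[OF T] by (simp add: mult_ac)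
  also have "\<dots> = complex_of_real (T * sqrt (2 * pi) * exp (-((T * x)^2)/2))"
    unfolding char_normal by (simp add: scaleR_conv_of_real)
  finally show "(LINT t|lborel. exp (-((t/T)^2)/2) *\<^sub>R iexp (t * x))
      = complex_of_real (T * sqrt (2 * pi) * exp (-((T * x)^2)/2))" .
qed

lemma integrable_gaussian:
  fixes T :: real
  assumes "T > 0"
  shows "integrable lborel (\<lambda>t. exp (-((t/T)^2)/2))"
  using gaussian_fourier_transform(1)[OF assms, of 0] integrable_norm by fastforce

definition gaussian_smoothing :: "real \<Rightarrow> (real \<Rightarrow> complex) \<Rightarrow> real \<Rightarrow> complex" where
  "gaussian_smoothing T g v = (LINT s|lborel. g (v + s/T) * complex_of_real (std_normal_density s))"

lemma gaussian_weighted_fourier_inversion: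
  fixes g :: "real \<Rightarrow> complex" and T v :: real
  assumes [measurable]: "g \<in> borel_measurable borel" and g_int: "integrable lborel g" and T: "T > 0"
  shows "(LINT t|lborel. exp (-((t/T)^2)/2) *\<^sub>R ((LINT u|lborel. g u * iexp (t * u)) * iexp (-(t * v))))
       = complex_of_real (2 * pi) * gaussian_smoothing T g v"
proof -
  define F where "F = (\<lambda>(t, u). exp (-((t/T)^2)/2) *\<^sub>R (g u * iexp (t * (u - v))))"
  have [measurable]: "F \<in> borel_measurable (lborel \<Otimes>\<^sub>M lborel)"
    unfolding F_def by measurable
  have F_int: "integrable (lborel \<Otimes>\<^sub>M lborel) F"
  proof (rule lborel_pair.Fubini_integrable)
    have "(\<lambda>t. LINT u|lborel. norm (F (t, u))) = (\<lambda>t. exp (-((t/T)^2)/2) * (LINT u|lborel. norm (g u)))"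
      by (auto simp: F_def norm_mult)
    then show "integrable lborel (\<lambda>t. LINT u|lborel. norm (F (t, u)))"
      using integrable_gaussian[OF T] by (simp add: integrable_mult_left)
    show "AE t in lborel. integrable lborel (\<lambda>u. F (t, u))"
      unfolding F_def
      by (intro AE_I2, simp, rule integrable_scaleR_right,
          rule Bochner_Integration.integrable_bound[where f="\<lambda>u. norm (g u)"])
         (auto simp: g_int norm_mult)
  qed fact
  have shift: "(LINT u|lborel. g u * iexp (t * u)) * iexp (-(t * v)) = (LINT u|lborel. g u * iexp (t * (u - v)))" for t
    by (simp add: exp_diff exp_minus field_simps right_diff_distrib flip: integral_mult_left_zero)
  have "(LINT t|lborel. exp (-((t/T)^2)/2) *\<^sub>R ((LINT u|lborel. g u * iexp (t * u)) * iexp (-(t * v))))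
      = (LINT t|lborel. LINT u|lborel. F (t, u))"
    unfolding shift F_def by simp
  also have "\<dots> = (LINT u|lborel. LINT t|lborel. F (t, u))"
    using lborel_pair.Fubini_integral[of "\<lambda>t u. F (t, u)"] F_int by simp
  also have "\<dots> = (LINT u|lborel. g u * complex_of_real (T * sqrt (2 * pi) * exp (-((T * (u - v))^2)/2)))"
  proof (intro Bochner_Integration.integral_cong refl)
    fix u
    have "(LINT t|lborel. F (t, u)) = (LINT t|lborel. g u * (exp (-((t/T)^2)/2) *\<^sub>R iexp (t * (u - v))))"
      unfolding F_def by (simp add: mult_ac)
    also have "\<dots> = g u * (LINT t|lborel. exp (-((t/T)^2)/2) *\<^sub>R iexp (t * (u - v)))"
      by (rule integral_mult_right_zero)
    finally show "(LINT t|lborel. F (t, u)) = g u * complex_of_real (T * sqrt (2 * pi) * exp (-((T * (u - v))^2)/2))"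
      by (simp only: gaussian_fourier_transform(2)[OF T])
  qed
  also have "\<dots> = \<bar>1/T\<bar> *\<^sub>R (LINT s|lborel. g (v + 1/T * s)
      * complex_of_real (T * sqrt (2 * pi) * exp (-((T * ((v + 1/T * s) - v))^2)/2)))"
    by (rule lborel_integral_real_affine) (use T in simp)
  also have "\<dots> = complex_of_real (2 * pi) * gaussian_smoothing T g v"
  proof -
    have "T * sqrt (2 * pi) * exp (-((T * ((v + 1/T * s) - v))^2)/2) = T * (2 * pi * std_normal_density s)" for s
      using T by (simp add: std_normal_density_def field_simps real_sqrt_mult)
    then have kernel: "complex_of_real (T * sqrt (2 * pi) * exp (-((T * ((v + 1/T * s) - v))^2)/2))
        = complex_of_real T * (complex_of_real (2 * pi) * complex_of_real (std_normal_density s))" for s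
      by (simp only: of_real_mult)
    show ?thesis
      using T unfolding kernel gaussian_smoothing_def
      by (simp add: scaleR_conv_of_real mult_ac field_simps flip: integral_mult_right_zero)
  qed
  finally show ?thesis .
qed

lemma gaussian_weighted_fourier_product:
  fixes g :: "real \<Rightarrow> complex" and T :: real and \<rho> :: "real measure" and \<phi> :: "real \<Rightarrow> real"
  assumes g_meas[measurable]: "g \<in> borel_measurable borel" and g_int: "integrable lborel g" and T: "T > 0"
    and [measurable_cong]: "sets \<rho> = sets borel" and "finite_measure \<rho>"
    and [measurable]: "\<phi> \<in> borel_measurable borel"
  shows "(LINT t|lborel. exp (-((t/T)^2)/2) *\<^sub>R
            ((LINT u|lborel. g u * iexp (t * u)) * (LINT y|\<rho>. iexp (-(t * \<phi> y)))))
       = complex_of_real (2 * pi) * (LINT y|\<rho>. gaussian_smoothing T g (\<phi> y))"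
proof -
  interpret \<rho>: finite_measure \<rho> by fact
  interpret pair_sigma_finite lborel \<rho> ..
  define G where "G t = (LINT u|lborel. g u * iexp (t * u))" for t
  define N where "N = (LINT u|lborel. norm (g u))"
  have [measurable]: "G \<in> borel_measurable borel"
    unfolding G_def by (rule lborel.borel_measurable_lebesgue_integral) simp
  have G_bound: "norm (G t) \<le> N" for t
  proof -
    have "norm (G t) \<le> (LINT u|lborel. norm (g u * iexp (t * u)))"
      unfolding G_def by (rule integral_norm_bound)
    also have "\<dots> = N" unfolding N_def by (simp add: norm_mult)
    finally show ?thesis .
  qed
  define F where "F = (\<lambda>(t, y). exp (-((t/T)^2)/2) *\<^sub>R (G t * iexp (-(t * \<phi> y))))"
  have [measurable]: "F \<in> borel_measurable (lborel \<Otimes>\<^sub>M \<rho>)"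
    unfolding F_def by measurable
  have F_int: "integrable (lborel \<Otimes>\<^sub>M \<rho>) F"
  proof (rule Fubini_integrable)
    have "(\<lambda>t. LINT y|\<rho>. norm (F (t, y))) = (\<lambda>t. (exp (-((t/T)^2)/2) * norm (G t)) * measure \<rho> (space \<rho>))"
      by (auto simp: F_def norm_mult)
    moreover have "integrable lborel (\<lambda>t. exp (-((t/T)^2)/2) * norm (G t))"
    proof (rule Bochner_Integration.integrable_bound)
      show "integrable lborel (\<lambda>t. exp (-((t/T)^2)/2) * N)"
        using integrable_gaussian[OF T] by (rule integrable_mult_left)
      show "AE t in lborel. norm (exp (-((t/T)^2)/2) * norm (G t)) \<le> norm (exp (-((t/T)^2)/2) * N)"
        using G_bound by (auto intro!: AE_I2 mult_left_mono simp: abs_mult order_trans[OF _ G_bound])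
    qed measurable
    ultimately show "integrable lborel (\<lambda>t. LINT y|\<rho>. norm (F (t, y)))" by simp
    show "AE t in lborel. integrable \<rho> (\<lambda>y. F (t, y))"
      by (intro AE_I2 \<rho>.integrable_const_bound[where B="exp (-((t/T)^2)/2) * N" for t])
         (auto simp: F_def norm_mult intro!: mult_left_mono G_bound)
  qed fact
  have "(LINT t|lborel. exp (-((t/T)^2)/2) *\<^sub>R
          ((LINT u|lborel. g u * iexp (t * u)) * (LINT y|\<rho>. iexp (-(t * \<phi> y)))))
      = (LINT t|lborel. LINT y|\<rho>. F (t, y))"
    unfolding F_def G_def by (simp flip: integral_mult_right_zero)
  also have "\<dots> = (LINT y|\<rho>. LINT t|lborel. F (t, y))"
    using Fubini_integral[of "\<lambda>t y. F (t, y)"] F_int by simp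
  also have "\<dots> = (LINT y|\<rho>. complex_of_real (2 * pi) * gaussian_smoothing T g (\<phi> y))"
    by (intro Bochner_Integration.integral_cong refl)
       (simp only: F_def G_def gaussian_weighted_fourier_inversion[OF g_meas g_int T] case_prod_conv)
  also have "\<dots> = complex_of_real (2 * pi) * (LINT y|\<rho>. gaussian_smoothing T g (\<phi> y))"
    by (rule integral_mult_right_zero)
  finally show ?thesis .
qed

section \<open>Gaussian summation of conditionally convergent integrals\<close>

definition rayleigh_density :: "real \<Rightarrow> real" where
  "rayleigh_density r = indicator {0..} r * (r * exp (-(r^2)/2))"

abbreviation rayleigh :: "real measure" where
  "rayleigh \<equiv> density lborel (\<lambda>r. ennreal (rayleigh_density r))"

lemma borel_measurable_rayleigh_density[measurable]: "rayleigh_density \<in> borel_measurable borel"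
  unfolding rayleigh_density_def by measurable

lemma emeasure_rayleigh_atLeast:
  assumes c: "0 \<le> c"
  shows "emeasure rayleigh {c..} = ennreal (exp (-(c^2)/2))"
proof -
  have "emeasure rayleigh {c..} = (\<integral>\<^sup>+r. ennreal (rayleigh_density r) * indicator {c..} r \<partial>lborel)"
    by (subst emeasure_density) auto
  also have "\<dots> = (\<integral>\<^sup>+r. ennreal (r * exp (-(r^2)/2)) * indicator {c..} r \<partial>lborel)"
    using c by (intro nn_integral_cong) (auto simp: rayleigh_density_def indicator_def)
  also have "\<dots> = ennreal (0 - (- exp (-(c^2)/2)))"
  proof (rule nn_integral_FTC_atLeast)
    show "DERIV (\<lambda>r. - exp (-(r^2)/2)) x :> x * exp (-(x^2)/2)" for x
      by (auto intro!: derivative_eq_intros)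
    show "0 \<le> x * exp (-(x^2)/2)" if "c \<le> x" for x
      using that c by auto
    show "((\<lambda>r::real. - exp (-(r^2)/2)) \<longlongrightarrow> 0) at_top"
      by real_asymp
  qed measurable
  finally show ?thesis by simp
qed

lemma prob_space_rayleigh: "prob_space rayleigh"
proof (rule prob_spaceI)
  have "emeasure rayleigh (space rayleigh) = (\<integral>\<^sup>+r. ennreal (rayleigh_density r) * indicator {0..} r \<partial>lborel)"
    by (subst emeasure_density) (auto intro!: nn_integral_cong simp: rayleigh_density_def indicator_def)
  also have "\<dots> = emeasure rayleigh {0..}"
    by (subst emeasure_density) auto
  finally show "emeasure rayleigh (space rayleigh) = 1"
    using emeasure_rayleigh_atLeast[of 0] by simp
qed

lemma AE_rayleigh_pos: "AE r in rayleigh. 0 < r"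
  by (subst AE_density)
     (auto simp: rayleigh_density_def indicator_def intro!: AE_I2 elim: le_neq_trans)

lemma integrable_rayleigh_id: "integrable rayleigh (\<lambda>r. r)"
proof -
  have "integrable lborel (\<lambda>r. rayleigh_density r *\<^sub>R r)"
  proof (rule Bochner_Integration.integrable_bound)
    show "integrable lborel (\<lambda>r. sqrt (2 * pi) * (std_normal_density r * r^2))"
      by (intro integrable_mult_right integrable_std_normal_moment)
    show "AE r in lborel. norm (rayleigh_density r *\<^sub>R r) \<le> norm (sqrt (2 * pi) * (std_normal_density r * r^2))"
      by (auto simp: rayleigh_density_def std_normal_density_def indicator_def power2_eq_square abs_mult)
  qed measurable
  then show ?thesis
    by (subst integrable_density) (auto simp: rayleigh_density_def indicator_def intro!: AE_I2)
qed

lemma rayleigh_average_indicator_interval: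
  assumes T: "0 < T"
  shows "(LINT r|rayleigh. indicator {-(r * T)..r * T} t) = exp (-((t/T)^2)/2)"
proof -
  interpret prob_space rayleigh by (rule prob_space_rayleigh)
  have "(\<lambda>r. indicator {-(r * T)..r * T} t :: real) = indicator {\<bar>t\<bar>/T..}"
    using T by (intro ext) (auto simp: indicator_def divide_le_eq abs_le_iff mult.commute)
  then have "(LINT r|rayleigh. indicator {-(r * T)..r * T} t) = measure rayleigh {\<bar>t\<bar>/T..}"
    by simp
  also have "\<dots> = exp (-((t/T)^2)/2)"
    using T emeasure_rayleigh_atLeast[of "\<bar>t\<bar>/T"] by (simp add: measure_def power_divide)
  finally show ?thesis .
qed

lemma truncated_integral_bound:
  fixes h :: "real \<Rightarrow> 'a::{banach, second_countable_topology}"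
  assumes [measurable]: "h \<in> borel_measurable borel" and h_bound: "\<And>t. norm (h t) \<le> M"
  shows "set_integrable lborel {-s..s} h"
    and "(LINT t|lborel. norm (indicator {-s..s} t *\<^sub>R h t)) \<le> M * (2 * \<bar>s\<bar>)"
proof -
  have M: "0 \<le> M" using h_bound[of 0] norm_ge_zero order_trans by blast
  have indicator_int: "integrable lborel (\<lambda>t. indicator {-s..s} t * M)"
    by (intro integrable_mult_left integrable_real_indicator) (auto simp: emeasure_lborel_Icc_eq)
  show h_int: "set_integrable lborel {-s..s} h"
    unfolding set_integrable_def
  proof (rule Bochner_Integration.integrable_bound)
    show "AE t in lborel. norm (indicator {-s..s} t *\<^sub>R h t) \<le> norm (indicator {-s..s} t * M)"
      using h_bound M by (auto simp: indicator_def)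
  qed (use indicator_int in measurable)
  have "(LINT t|lborel. norm (indicator {-s..s} t *\<^sub>R h t)) \<le> (LINT t|lborel. indicator {-s..s} t * M)"
    using h_int h_bound unfolding set_integrable_def
    by (intro integral_mono integrable_norm indicator_int) (auto simp: indicator_def)
  also have "\<dots> = measure lborel {-s..s} * M" by simp
  also have "\<dots> \<le> M * (2 * \<bar>s\<bar>)"
    using M by (auto simp: measure_lborel_Icc mult_nonneg_nonpos)
  finally show "(LINT t|lborel. norm (indicator {-s..s} t *\<^sub>R h t)) \<le> M * (2 * \<bar>s\<bar>)" .
qed

lemma borel_measurable_truncated_integral:
  fixes h :: "real \<Rightarrow> 'a::{banach, second_countable_topology}"
  assumes [measurable]: "h \<in> borel_measurable borel"
  shows "(\<lambda>s. LINT t:{-s..s}|lborel. h t) \<in> borel_measurable borel"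
proof -
  have "(\<lambda>(s, t). indicator {-s..s} t *\<^sub>R h t) = (\<lambda>(s::real, t). of_bool (-s \<le> t \<and> t \<le> s) *\<^sub>R h t)"
    by (auto simp: indicator_def)
  then have "(\<lambda>(s, t). indicator {-s..s} t *\<^sub>R h t) \<in> borel_measurable (borel \<Otimes>\<^sub>M lborel)"
    by simp
  then show ?thesis
    unfolding set_lebesgue_integral_def
    using lborel.borel_measurable_lebesgue_integral[of "\<lambda>s t. indicator {-s..s} t *\<^sub>R h t" borel]
    by simp
qed

lemma truncated_integral_bounded:
  fixes h :: "real \<Rightarrow> 'a::{banach, second_countable_topology}"
  assumes [measurable]: "h \<in> borel_measurable borel" and h_bound: "\<And>t. norm (h t) \<le> M"
    and lim: "((\<lambda>A. LINT t:{-A..A}|lborel. h t) \<longlongrightarrow> L) at_top"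
  obtains B where "\<And>s. 0 \<le> s \<Longrightarrow> norm (LINT t:{-s..s}|lborel. h t) \<le> B"
proof -
  define H where "H s = (LINT t:{-s..s}|lborel. h t)" for s
  have M: "0 \<le> M" using h_bound[of 0] norm_ge_zero order_trans by blast
  have H_linear: "norm (H s) \<le> M * (2 * \<bar>s\<bar>)" for s
    using integral_norm_bound[of lborel "\<lambda>t. indicator {-s..s} t *\<^sub>R h t"]
      truncated_integral_bound(2)[OF assms(1) h_bound, of s]
    unfolding H_def set_lebesgue_integral_def by linarith
  obtain S where S: "\<And>s. s \<ge> S \<Longrightarrow> norm (H s - L) < 1"
    using lim[THEN tendstoD, of 1] by (auto simp: eventually_at_top_linorder dist_norm H_def)
  have "norm (H s) \<le> max (M * (2 * \<bar>S\<bar>)) (norm L + 1)" if "0 \<le> s" for s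
  proof (cases "s \<ge> S")
    case True
    then have "norm (H s) \<le> norm L + norm (H s - L)" by (metis norm_triangle_sub add.commute)
    with S[OF True] show ?thesis by linarith
  next
    case False
    then have "M * (2 * \<bar>s\<bar>) \<le> M * (2 * \<bar>S\<bar>)" using that M by (intro mult_left_mono) auto
    with H_linear[of s] show ?thesis by linarith
  qed
  then show ?thesis
    using that unfolding H_def by blast
qed

lemma gaussian_weighted_integral_eq_rayleigh_average:
  fixes h :: "real \<Rightarrow> 'a::{banach, second_countable_topology}"
  assumes [measurable]: "h \<in> borel_measurable borel" and h_bound: "\<And>t. norm (h t) \<le> M" and T: "0 < T"
  shows "(LINT t|lborel. exp (-((t/T)^2)/2) *\<^sub>R h t) = (LINT r|rayleigh. (LINT t:{-(r * T)..r * T}|lborel. h t))"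
proof -
  interpret prob_space rayleigh by (rule prob_space_rayleigh)
  interpret pair_sigma_finite rayleigh lborel ..
  have M: "0 \<le> M" using h_bound[of 0] norm_ge_zero order_trans by blast
  define F where "F = (\<lambda>(r, t). indicator {-(r * T)..r * T} t *\<^sub>R h t)"
  have F_eq: "F = (\<lambda>(r::real, t). of_bool (-(r * T) \<le> t \<and> t \<le> r * T) *\<^sub>R h t)"
    by (auto simp: F_def indicator_def)
  have [measurable]: "F \<in> borel_measurable (rayleigh \<Otimes>\<^sub>M lborel)"
    unfolding F_eq by simp
  have F_int: "integrable (rayleigh \<Otimes>\<^sub>M lborel) F"
  proof (rule Fubini_integrable)
    show "integrable rayleigh (\<lambda>r. LINT t|lborel. norm (F (r, t)))"
    proof (rule Bochner_Integration.integrable_bound)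
      show "integrable rayleigh (\<lambda>r. M * (2 * T) * r)"
        using integrable_rayleigh_id by (rule integrable_mult_right)
      have "(\<lambda>(r, t). norm (F (r, t))) \<in> borel_measurable (rayleigh \<Otimes>\<^sub>M lborel)"
        by measurable
      then show "(\<lambda>r. LINT t|lborel. norm (F (r, t))) \<in> borel_measurable rayleigh"
        by (rule lborel.borel_measurable_lebesgue_integral)
      show "AE r in rayleigh. norm (LINT t|lborel. norm (F (r, t))) \<le> norm (M * (2 * T) * r)"
        using AE_rayleigh_pos
      proof eventually_elim
        case (elim r)
        have "norm (LINT t|lborel. norm (F (r, t))) = (LINT t|lborel. norm (F (r, t)))"
          by (simp add: integral_nonneg_AE)
        also have "\<dots> \<le> M * (2 * \<bar>r * T\<bar>)"
          unfolding F_def case_prod_conv by (rule truncated_integral_bound(2)[OF assms(1) h_bound])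
        also have "\<dots> = norm (M * (2 * T) * r)"
          using elim T M by (simp add: abs_mult)
        finally show ?case .
      qed
    qed
    show "AE r in rayleigh. integrable lborel (\<lambda>t. F (r, t))"
      using truncated_integral_bound(1)[OF assms(1) h_bound]
      by (simp add: F_def set_integrable_def)
  qed fact
  have "(LINT t|lborel. exp (-((t/T)^2)/2) *\<^sub>R h t) = (LINT t|lborel. LINT r|rayleigh. F (r, t))"
  proof (intro Bochner_Integration.integral_cong refl)
    fix t
    have "integrable rayleigh (\<lambda>r. of_bool (-(r * T) \<le> t \<and> t \<le> r * T) :: real)"
      by (rule integrable_const_bound[where B=1]) auto
    then have "integrable rayleigh (\<lambda>r. indicator {-(r * T)..r * T} t :: real)"
      by (simp add: indicator_def)
    then show "exp (-((t/T)^2)/2) *\<^sub>R h t = (LINT r|rayleigh. F (r, t))"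
      unfolding rayleigh_average_indicator_interval[OF T, symmetric] F_def by simp
  qed
  also have "\<dots> = (LINT r|rayleigh. LINT t|lborel. F (r, t))"
    by (rule Fubini_integral) (use F_int in simp)
  finally show ?thesis
    by (simp add: F_def set_lebesgue_integral_def)
qed

lemma tendsto_gaussian_weighted_integral:
  fixes h :: "real \<Rightarrow> 'a::{banach, second_countable_topology}"
  assumes [measurable]: "h \<in> borel_measurable borel" and h_bound: "\<And>t. norm (h t) \<le> M"
    and lim: "((\<lambda>A. LINT t:{-A..A}|lborel. h t) \<longlongrightarrow> L) at_top"
  shows "((\<lambda>T. LINT t|lborel. exp (-((t/T)^2)/2) *\<^sub>R h t) \<longlongrightarrow> L) at_top"
proof -
  interpret prob_space rayleigh by (rule prob_space_rayleigh)
  define H where "H s = (LINT t:{-s..s}|lborel. h t)" for s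
  have [measurable]: "H \<in> borel_measurable borel"
    unfolding H_def by (rule borel_measurable_truncated_integral) simp
  obtain B where H_bound: "\<And>s. 0 \<le> s \<Longrightarrow> norm (H s) \<le> B"
    using truncated_integral_bounded[OF assms] unfolding H_def by blast
  have "((\<lambda>T. LINT r|rayleigh. H (r * T)) \<longlongrightarrow> (LINT r|rayleigh. L)) at_top"
  proof (rule integral_dominated_convergence_at_top[where w="\<lambda>_. B"])
    show "AE r in rayleigh. ((\<lambda>T. H (r * T)) \<longlongrightarrow> L) at_top"
      using AE_rayleigh_pos
    proof eventually_elim
      case (elim r)
      then have "filterlim (\<lambda>T. r * T) at_top at_top"
        by (intro filterlim_tendsto_pos_mult_at_top[OF tendsto_const]) (auto simp: filterlim_ident)
      then show ?case
        using lim unfolding H_def by (rule filterlim_compose[rotated])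
    qed
    show "\<forall>\<^sub>F T in at_top. AE r in rayleigh. norm (H (r * T)) \<le> B"
      using eventually_ge_at_top[of "0::real"]
    proof eventually_elim
      case (elim T)
      show ?case
        using AE_rayleigh_pos by eventually_elim (use elim in \<open>auto intro!: H_bound\<close>)
    qed
  qed auto
  moreover have "prob UNIV = 1"
    using prob_space by simp
  ultimately have "((\<lambda>T. LINT r|rayleigh. H (r * T)) \<longlongrightarrow> L) at_top"
    by simp
  then show ?thesis
  proof (rule Lim_transform_eventually)
    show "\<forall>\<^sub>F T in at_top. (LINT r|rayleigh. H (r * T)) = (LINT t|lborel. exp (-((t/T)^2)/2) *\<^sub>R h t)"
      using eventually_gt_at_top[of "0::real"] unfolding H_def
      by eventually_elim (rule gaussian_weighted_integral_eq_rayleigh_average[OF assms(1,2), symmetric])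
  qed
qed

section \<open>Gaussian smoothing as an approximate identity\<close>

lemma gaussian_smoothing_bound:
  fixes g :: "real \<Rightarrow> complex"
  assumes [measurable]: "g \<in> borel_measurable borel" and g_bound: "\<And>u. norm (g u) \<le> C"
  shows "norm (gaussian_smoothing T g v) \<le> C"
proof -
  have C: "0 \<le> C" using g_bound[of 0] norm_ge_zero order_trans by blast
  have pointwise: "norm (g (v + s/T) * complex_of_real (std_normal_density s)) \<le> C * std_normal_density s" for s
    using g_bound C by (auto intro!: mult_right_mono simp: norm_mult normal_density_nonneg)
  have int: "integrable lborel (\<lambda>s. g (v + s/T) * complex_of_real (std_normal_density s))"
  proof (rule Bochner_Integration.integrable_bound)
    show "integrable lborel (\<lambda>s. C * std_normal_density s)" by (intro integrable_mult_right) simp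
    show "AE s in lborel. norm (g (v + s/T) * complex_of_real (std_normal_density s)) \<le> norm (C * std_normal_density s)"
      using pointwise C by (auto intro!: AE_I2 order_trans[OF _ abs_ge_self])
  qed measurable
  have "norm (gaussian_smoothing T g v) \<le> (LINT s|lborel. norm (g (v + s/T) * complex_of_real (std_normal_density s)))"
    unfolding gaussian_smoothing_def by (rule integral_norm_bound)
  also have "\<dots> \<le> (LINT s|lborel. C * std_normal_density s)"
    using int pointwise by (intro integral_mono integrable_norm) auto
  also have "\<dots> = C" by simp
  finally show ?thesis .
qed

text \<open>Only g' is continuous at v, and g agrees with g' merely almost everywhere; so the
  smoothing is first rewritten as a convolution in u = v + s/T, where g can be replaced by g',
  and the limit is taken afterwards.\<close>

lemma tendsto_gaussian_smoothing:
  fixes g g' :: "real \<Rightarrow> complex"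
  assumes g_meas[measurable]: "g \<in> borel_measurable borel" and ae: "AE u in lebesgue. g u = g' u"
    and g'_bound: "\<And>u. norm (g' u) \<le> C" and cont: "isCont g' v"
  shows "((\<lambda>T. gaussian_smoothing T g v) \<longlongrightarrow> g' v) at_top"
proof -
  have "g \<in> borel_measurable lebesgue" by (rule measurable_completion) simp
  then have g'_meas[measurable]: "g' \<in> borel_measurable lebesgue"
    using ae by (rule borel_measurable_AE)
  have C: "0 \<le> C" using g'_bound[of 0] norm_ge_zero order_trans by blast
  have normal_meas: "(\<lambda>u. complex_of_real (T * std_normal_density (T * (u - v)))) \<in> borel_measurable lebesgue" for T
    by (intro measurable_completion) simp
  have rescale: "(LINT s|lebesgue. h (v + s/T) * complex_of_real (std_normal_density s))
      = (LINT u|lebesgue. h u * complex_of_real (T * std_normal_density (T * (u - v))))"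
    if T: "T > 0" for T and h :: "real \<Rightarrow> complex"
  proof -
    have "(LINT u|lebesgue. h u * complex_of_real (T * std_normal_density (T * (u - v))))
        = \<bar>1/T\<bar> *\<^sub>R (LINT s|lebesgue. h (v + 1/T * s)
            * complex_of_real (T * std_normal_density (T * ((v + 1/T * s) - v))))"
      by (rule lebesgue_integral_real_affine) (use T in simp)
    also have "\<dots> = (LINT s|lebesgue. h (v + s/T) * complex_of_real (std_normal_density s))"
      using T by (simp add: scaleR_conv_of_real field_simps flip: integral_mult_right_zero)
    finally show ?thesis ..
  qed
  have smoothing_eq: "gaussian_smoothing T g v
      = (LINT s|lebesgue. g' (v + s/T) * complex_of_real (std_normal_density s))" if T: "T > 0" for T
  proof -
    have "gaussian_smoothing T g v = (LINT s|lebesgue. g (v + s/T) * complex_of_real (std_normal_density s))"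
      unfolding gaussian_smoothing_def by (rule integral_completion[symmetric]) measurable
    also have "\<dots> = (LINT u|lebesgue. g u * complex_of_real (T * std_normal_density (T * (u - v))))"
      by (rule rescale[OF T])
    also have "\<dots> = (LINT u|lebesgue. g' u * complex_of_real (T * std_normal_density (T * (u - v))))"
    proof (rule integral_cong_AE)
      show "AE u in lebesgue. g u * complex_of_real (T * std_normal_density (T * (u - v)))
          = g' u * complex_of_real (T * std_normal_density (T * (u - v)))"
        using ae by eventually_elim simp
    qed (use normal_meas in \<open>auto intro!: borel_measurable_times measurable_completion\<close>)
    also have "\<dots> = (LINT s|lebesgue. g' (v + s/T) * complex_of_real (std_normal_density s))"
      by (rule rescale[OF T, symmetric])
    finally show ?thesis .
  qed
  have normal_int: "integrable lebesgue std_normal_density" "(LINT s|lebesgue. std_normal_density s) = 1"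
    by (simp_all add: integrable_completion integral_completion)
  have dilated_meas: "(\<lambda>s. g' (v + s/T) * complex_of_real (std_normal_density s)) \<in> borel_measurable lebesgue" for T
  proof (cases "T = 0")
    case True
    then show ?thesis by (simp, intro borel_measurable_times measurable_completion) auto
  next
    case False
    have "(\<lambda>s. g' (v + (1/T) *\<^sub>R s)) \<in> borel_measurable lebesgue"
      by (rule borel_measurable_affine[OF g'_meas]) (use False in simp)
    moreover have "(\<lambda>s. complex_of_real (std_normal_density s)) \<in> borel_measurable lebesgue"
      by (intro measurable_completion) simp
    ultimately show ?thesis
      by (simp add: borel_measurable_times)
  qed
  have "((\<lambda>T. LINT s|lebesgue. g' (v + s/T) * complex_of_real (std_normal_density s))
      \<longlongrightarrow> (LINT s|lebesgue. g' v * complex_of_real (std_normal_density s))) at_top"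
  proof (rule integral_dominated_convergence_at_top[where w="\<lambda>s. C * std_normal_density s"])
    show "integrable lebesgue (\<lambda>s. C * std_normal_density s)"
      using normal_int(1) by (rule integrable_mult_right)
    show "AE s in lebesgue. ((\<lambda>T. g' (v + s/T) * complex_of_real (std_normal_density s))
        \<longlongrightarrow> g' v * complex_of_real (std_normal_density s)) at_top"
    proof (rule AE_I2)
      fix s
      have "((\<lambda>T. v + s/T) \<longlongrightarrow> v) at_top" by real_asymp
      with cont have "((\<lambda>T. g' (v + s/T)) \<longlongrightarrow> g' v) at_top"
        by (rule isCont_tendsto_compose)
      then show "((\<lambda>T. g' (v + s/T) * complex_of_real (std_normal_density s))
          \<longlongrightarrow> g' v * complex_of_real (std_normal_density s)) at_top"
        by (intro tendsto_mult tendsto_const)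
    qed
    show "\<forall>\<^sub>F T in at_top. AE s in lebesgue.
        norm (g' (v + s/T) * complex_of_real (std_normal_density s)) \<le> C * std_normal_density s"
      using g'_bound by (auto intro!: always_eventually AE_I2 mult_right_mono simp: norm_mult normal_density_nonneg)
  qed (use dilated_meas in \<open>auto intro: borel_measurable_times measurable_completion\<close>)
  then have "((\<lambda>T. LINT s|lebesgue. g' (v + s/T) * complex_of_real (std_normal_density s)) \<longlongrightarrow> g' v) at_top"
    using normal_int by simp
  then show ?thesis
  proof (rule Lim_transform_eventually)
    show "\<forall>\<^sub>F T in at_top. (LINT s|lebesgue. g' (v + s/T) * complex_of_real (std_normal_density s))
        = gaussian_smoothing T g v"
      using eventually_gt_at_top[of "0::real"] by eventually_elim (rule smoothing_eq[symmetric])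
  qed
qed

section \<open>Mellin transforms along a vertical line\<close>

lemma exp_substitution:
  fixes F :: "real \<Rightarrow> complex"
  assumes F: "F absolutely_integrable_on {0<..}"
  shows "integrable lebesgue (\<lambda>u. exp u *\<^sub>R F (exp u))"
    and "(LINT u|lebesgue. exp u *\<^sub>R F (exp u)) = (LINT x:{0<..}|lebesgue. F x)"
proof -
  have "range exp = ({0<..} :: real set)"
    by (auto simp: image_iff) (metis exp_ln)
  then have "(\<lambda>x. \<bar>exp x\<bar> *\<^sub>R F (exp x)) absolutely_integrable_on UNIV \<and>
         integral UNIV (\<lambda>x. \<bar>exp x\<bar> *\<^sub>R F (exp x)) = integral {0<..} F"
    by (subst has_absolute_integral_change_of_variables_real[of UNIV exp exp])
       (auto simp: F intro!: derivative_eq_intros inj_onI)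
  then have abs_int: "(\<lambda>x. exp x *\<^sub>R F (exp x)) absolutely_integrable_on UNIV"
    and integral_eq: "integral UNIV (\<lambda>x. exp x *\<^sub>R F (exp x)) = integral {0<..} F"
    by auto
  show "integrable lebesgue (\<lambda>u. exp u *\<^sub>R F (exp u))"
    using abs_int by (simp add: set_integrable_def)
  have "(LINT u|lebesgue. exp u *\<^sub>R F (exp u)) = (LINT u:UNIV|lebesgue. exp u *\<^sub>R F (exp u))"
    by (simp add: set_lebesgue_integral_def)
  also have "\<dots> = integral UNIV (\<lambda>x. exp x *\<^sub>R F (exp x))"
    by (rule set_lebesgue_integral_eq_integral(2)[OF abs_int])
  also have "\<dots> = (LINT x:{0<..}|lebesgue. F x)"
    unfolding integral_eq by (rule set_lebesgue_integral_eq_integral(2)[OF F, symmetric])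
  finally show "(LINT u|lebesgue. exp u *\<^sub>R F (exp u)) = (LINT x:{0<..}|lebesgue. F x)" .
qed

lemma borel_measurable_completion_AE_eq:
  fixes f g :: "'a \<Rightarrow> 'b::topological_space"
  assumes g: "g \<in> borel_measurable (completion M)" and ae: "AE x in M. f x = g x"
  shows "f \<in> borel_measurable (completion M)"
proof -
  obtain N where N: "{x \<in> space M. f x \<noteq> g x} \<subseteq> N" "emeasure M N = 0" "N \<in> sets M"
    using ae by (rule AE_E)
  have N_null: "N \<in> null_sets (completion M)"
    using N by (auto intro!: null_sets_completionI)
  show ?thesis
  proof (rule measurableI)
    fix A :: "'b set" assume A: "A \<in> sets borel"
    have "f -` A \<inter> space (completion M)
        = ((g -` A \<inter> space (completion M)) - N) \<union> (f -` A \<inter> space (completion M) \<inter> N)"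
      using N(1) by auto
    moreover have "g -` A \<inter> space (completion M) \<in> sets (completion M)"
      using g A by (rule measurable_sets)
    moreover have "f -` A \<inter> space (completion M) \<inter> N \<in> null_sets (completion M)"
      using N_null by (rule null_sets_completion_subset[rotated]) auto
    ultimately show "f -` A \<inter> space (completion M) \<in> sets (completion M)"
      using N_null by (metis (no_types, lifting) null_setsD2 sets.Diff sets.Un)
  qed simp
qed

definition exp_pullback :: "real \<Rightarrow> (real \<Rightarrow> complex) \<Rightarrow> real \<Rightarrow> complex" where
  "exp_pullback \<sigma> f u = complex_of_real (exp (\<sigma> * u)) * f (exp u)"

definition powr_weighted :: "real measure \<Rightarrow> real \<Rightarrow> real measure" where
  "powr_weighted \<mu> \<sigma> = density \<mu> (\<lambda>y. ennreal (indicator {0<..} y * y powr (- \<sigma>)))"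

lemma sets_powr_weighted[measurable_cong, simp]: "sets (powr_weighted \<mu> \<sigma>) = sets \<mu>"
  by (simp add: powr_weighted_def)

lemma finite_measure_powr_weighted:
  assumes "sets \<mu> = sets borel" and "(\<integral>\<^sup>+ x. ennreal (indicator {0<..} x * x powr (- \<sigma>)) \<partial>\<mu>) < \<infinity>"
  shows "finite_measure (powr_weighted \<mu> \<sigma>)"
proof (rule finite_measureI)
  have "emeasure (powr_weighted \<mu> \<sigma>) (space (powr_weighted \<mu> \<sigma>))
      = (\<integral>\<^sup>+ x. ennreal (indicator {0<..} x * x powr (- \<sigma>)) \<partial>\<mu>)"
    unfolding powr_weighted_def
    using assms(1) by (subst emeasure_density) (auto intro!: nn_integral_cong simp: indicator_def)
  with assms(2) show "emeasure (powr_weighted \<mu> \<sigma>) (space (powr_weighted \<mu> \<sigma>)) \<noteq> \<infinity>"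
    by simp
qed

lemma exp_pullback_ln:
  assumes "0 < y"
  shows "exp_pullback \<sigma> f (ln y) = complex_of_real (y powr \<sigma>) * f y"
  using assms by (simp add: exp_pullback_def powr_def mult.commute)

lemma norm_exp_pullback_le:
  assumes "\<And>x. 0 < x \<Longrightarrow> norm (complex_of_real (x powr \<sigma>) * f x) \<le> C"
  shows "norm (exp_pullback \<sigma> f u) \<le> C"
  using assms[of "exp u"] exp_pullback_ln[of "exp u" \<sigma> f] by simp

lemma of_real_powr_line:
  fixes x a t :: real
  assumes "0 < x"
  shows "complex_of_real x powr (complex_of_real a + \<i> * complex_of_real t)
       = complex_of_real (x powr a) * iexp (t * ln x)"
proof -
  have "complex_of_real (ln x) * (complex_of_real a + \<i> * complex_of_real t)
      = complex_of_real a * complex_of_real (ln x) + \<i> * (complex_of_real t * complex_of_real (ln x))"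
    by (simp add: algebra_simps)
  moreover have "(complex_of_real a + \<i> * complex_of_real t) * complex_of_real (ln x)
      = complex_of_real a * complex_of_real (ln x) + \<i> * (complex_of_real t * complex_of_real (ln x))"
    by (simp add: algebra_simps)
  ultimately show ?thesis
    using assms by (simp add: powr_def Ln_of_real exp_add flip: exp_of_real)
qed

lemma borel_measurable_locally_integrable_Ioi:
  fixes f :: "real \<Rightarrow> 'a::{banach, second_countable_topology}"
  assumes loc_int: "\<And>a b. 0 < a \<Longrightarrow> set_integrable lebesgue {a..b} f"
  shows "(\<lambda>x. indicator {0<..} x *\<^sub>R f x) \<in> borel_measurable lebesgue"
proof (rule borel_measurable_LIMSEQ_metric)
  fix n :: nat
  have "set_integrable lebesgue {1/Suc n..Suc n} f" by (rule loc_int) simp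
  then show "(\<lambda>x. indicator {1/Suc n..Suc n} x *\<^sub>R f x) \<in> borel_measurable lebesgue"
    unfolding set_integrable_def by (rule borel_measurable_integrable)
next
  fix x :: real
  have "\<forall>\<^sub>F n in sequentially. indicator {1/Suc n..Suc n} x = (indicator {0<..} x :: real)"
  proof (cases "x > 0")
    case True
    obtain N :: nat where N: "N > x" "N > 1/x"
      using reals_Archimedean2[of "max x (1/x)"] by auto
    show ?thesis
      unfolding eventually_sequentially
    proof (intro exI allI impI)
      fix n assume "N \<le> n"
      then have "x \<le> Suc n" "1/x < Suc n" using N by linarith+
      then show "indicator {1/Suc n..Suc n} x = (indicator {0<..} x :: real)"
        using True by (simp add: indicator_def field_simps)
    qed
  next
    case False
    have "\<not> 1 / real (Suc n) \<le> x" for n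
      using False by (smt (verit) divide_pos_pos of_nat_0_less_iff zero_less_Suc)
    then show ?thesis
      using False by (simp add: indicator_def)
  qed
  then show "(\<lambda>n. indicator {1/Suc n..Suc n} x *\<^sub>R f x) \<longlonglongrightarrow> indicator {0<..} x *\<^sub>R f x"
    by (rule tendsto_eventually[OF eventually_mono]) simp
qed

lemma mellin_line_eq_fourier_exp_pullback:
  fixes f :: "real \<Rightarrow> complex"
  assumes f_meas: "(\<lambda>x. indicator {0<..} x *\<^sub>R f x) \<in> borel_measurable lebesgue"
    and f_int: "(\<integral>\<^sup>+ x. ennreal (indicator {0<..} x * (x powr (\<sigma> - 1) * norm (f x))) \<partial>lebesgue) < \<infinity>"
  shows "integrable lebesgue (\<lambda>u. exp_pullback \<sigma> f u * iexp (t * u))"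
    and "(LINT u|lebesgue. exp_pullback \<sigma> f u * iexp (t * u))
       = mellin f (complex_of_real \<sigma> + \<i> * complex_of_real t)"
proof -
  define F where "F x = complex_of_real (x powr (\<sigma> - 1)) * (iexp (t * ln x) * f x)" for x
  have F_int: "F absolutely_integrable_on {0<..}"
    unfolding set_integrable_def
  proof (rule integrableI_bounded)
    have "(\<lambda>x. indicator {0<..} x *\<^sub>R F x)
        = (\<lambda>x. (complex_of_real (x powr (\<sigma> - 1)) * iexp (t * ln x)) * (indicator {0<..} x *\<^sub>R f x))"
      by (auto simp: F_def indicator_def)
    moreover have "(\<lambda>x::real. complex_of_real (x powr (\<sigma> - 1)) * iexp (t * ln x)) \<in> borel_measurable lebesgue"
      by (intro measurable_completion) measurable
    ultimately show "(\<lambda>x. indicator {0<..} x *\<^sub>R F x) \<in> borel_measurable lebesgue"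
      using f_meas by (simp only:) (rule borel_measurable_times)
    have "(\<integral>\<^sup>+ x. ennreal (norm (indicator {0<..} x *\<^sub>R F x)) \<partial>lebesgue)
        = (\<integral>\<^sup>+ x. ennreal (indicator {0<..} x * (x powr (\<sigma> - 1) * norm (f x))) \<partial>lebesgue)"
      by (intro nn_integral_cong) (auto simp: F_def indicator_def norm_mult)
    with f_int show "(\<integral>\<^sup>+ x. ennreal (norm (indicator {0<..} x *\<^sub>R F x)) \<partial>lebesgue) < \<infinity>"
      by simp
  qed
  have pullback: "exp u *\<^sub>R F (exp u) = exp_pullback \<sigma> f u * iexp (t * u)" for u
  proof -
    have "exp u * exp u powr (\<sigma> - 1) = exp (\<sigma> * u)"
      by (simp add: powr_def flip: exp_add) (simp add: algebra_simps)
    then show ?thesis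
      by (simp add: F_def exp_pullback_def scaleR_conv_of_real mult_ac flip: of_real_mult)
  qed
  show "integrable lebesgue (\<lambda>u. exp_pullback \<sigma> f u * iexp (t * u))"
    using exp_substitution(1)[OF F_int] by (simp add: pullback)
  have "mellin f (complex_of_real \<sigma> + \<i> * complex_of_real t) = (LINT x:{0<..}|lebesgue. F x)"
    unfolding mellin_def
  proof (rule set_lebesgue_integral_cong, simp, intro allI impI)
    fix x :: real assume "x \<in> {0<..}"
    then show "complex_of_real x powr (complex_of_real \<sigma> + \<i> * complex_of_real t - 1) * f x = F x"
      using of_real_powr_line[of x "\<sigma> - 1" t] by (simp add: F_def algebra_simps)
  qed
  then show "(LINT u|lebesgue. exp_pullback \<sigma> f u * iexp (t * u))
      = mellin f (complex_of_real \<sigma> + \<i> * complex_of_real t)"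
    using exp_substitution(2)[OF F_int] by (simp add: pullback)
qed

lemma mellin_measure_line_eq_fourier:
  assumes sets_mu: "sets \<mu> = sets borel"
  shows "mellin_measure \<mu> (1 - (complex_of_real \<sigma> + \<i> * complex_of_real t))
       = (LINT y|powr_weighted \<mu> \<sigma>. iexp (-(t * ln y)))"
proof -
  have "mellin_measure \<mu> (1 - (complex_of_real \<sigma> + \<i> * complex_of_real t))
      = (LINT y:{0<..}|\<mu>. complex_of_real (y powr (-\<sigma>)) * iexp ((-t) * ln y))"
    unfolding mellin_measure_def
  proof (rule set_lebesgue_integral_cong, simp add: sets_mu, intro allI impI)
    fix y :: real assume "y \<in> {0<..}"
    then show "complex_of_real y powr (1 - (complex_of_real \<sigma> + \<i> * complex_of_real t) - 1)
        = complex_of_real (y powr (-\<sigma>)) * iexp ((-t) * ln y)"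
      using of_real_powr_line[of y "-\<sigma>" "-t"] by (simp add: algebra_simps)
  qed
  also have "\<dots> = (LINT y|\<mu>. (indicator {0<..} y * y powr (- \<sigma>)) *\<^sub>R iexp (-(t * ln y)))"
    unfolding set_lebesgue_integral_def
    by (intro Bochner_Integration.integral_cong refl) (auto simp: indicator_def scaleR_conv_of_real)
  also have "\<dots> = (LINT y|powr_weighted \<mu> \<sigma>. iexp (-(t * ln y)))"
    unfolding powr_weighted_def using sets_mu by (intro integral_density[symmetric]) auto
  finally show ?thesis .
qed

lemma bounded_borel_representative:
  fixes g :: "'a \<Rightarrow> complex"
  assumes "g \<in> borel_measurable (completion M)" and g_bound: "\<And>u. norm (g u) \<le> C"
  obtains g' where "g' \<in> borel_measurable M" "\<And>u. norm (g' u) \<le> C" "AE u in M. g' u = g u"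
proof -
  have C: "0 \<le> C" using g_bound[of undefined] norm_ge_zero[of "g undefined"] by linarith
  have "(\<lambda>u. Re (g u)) \<in> borel_measurable (completion M)" "(\<lambda>u. Im (g u)) \<in> borel_measurable (completion M)"
    using assms(1) by simp_all
  from this[THEN completion_ex_borel_measurable_real] obtain re im
    where re_meas[measurable]: "re \<in> borel_measurable M" and re: "AE u in M. Re (g u) = re u"
      and im_meas[measurable]: "im \<in> borel_measurable M" and im: "AE u in M. Im (g u) = im u"
    by blast
  define g0 where "g0 u = complex_of_real (re u) + \<i> * complex_of_real (im u)" for u
  show ?thesis
  proof
    show "(\<lambda>u. if norm (g0 u) \<le> C then g0 u else 0) \<in> borel_measurable M"
      unfolding g0_def by measurable
    show "norm (if norm (g0 u) \<le> C then g0 u else 0) \<le> C" for u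
      using C by simp
    show "AE u in M. (if norm (g0 u) \<le> C then g0 u else 0) = g u"
      using re im
    proof eventually_elim
      case (elim u)
      then have "g0 u = g u" by (simp add: g0_def complex_eq_iff)
      then show ?case using g_bound[of u] by simp
    qed
  qed
qed

lemma mellin_line_integrand_fourier_representation:
  fixes f :: "real \<Rightarrow> complex"
  assumes sets_mu: "sets \<mu> = sets borel"
    and loc_int: "\<And>a b. 0 < a \<Longrightarrow> set_integrable lebesgue {a..b} f"
    and f_int: "(\<integral>\<^sup>+ x. ennreal (indicator {0<..} x * (x powr (\<sigma> - 1) * norm (f x))) \<partial>lebesgue) < \<infinity>"
    and f_bound: "\<And>x. 0 < x \<Longrightarrow> norm (complex_of_real (x powr \<sigma>) * f x) \<le> C"
  obtains g where "g \<in> borel_measurable borel" "integrable lborel g" "\<And>u. norm (g u) \<le> C"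
    "AE u in lebesgue. g u = exp_pullback \<sigma> f u"
    "\<And>t. mellin_line_integrand f \<mu> \<sigma> t
        = \<i> * ((LINT u|lborel. g u * iexp (t * u)) * (LINT y|powr_weighted \<mu> \<sigma>. iexp (-(t * ln y))))"
proof -
  note pullback = mellin_line_eq_fourier_exp_pullback[OF borel_measurable_locally_integrable_Ioi[OF loc_int] f_int]
  have pullback_int: "integrable lebesgue (exp_pullback \<sigma> f)"
    using pullback(1)[of 0] by simp
  obtain g where g_meas[measurable]: "g \<in> borel_measurable borel" and g_bound: "\<And>u. norm (g u) \<le> C"
    and g_ae: "AE u in lborel. g u = exp_pullback \<sigma> f u"
    using bounded_borel_representative[OF borel_measurable_integrable[OF pullback_int]
        norm_exp_pullback_le[OF f_bound]] by auto
  have g_ae': "AE u in lebesgue. g u = exp_pullback \<sigma> f u"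
    using g_ae by (rule AE_completion)
  have "integrable lebesgue g"
    by (rule integrable_cong_AE_imp[OF pullback_int])
       (use g_ae' in \<open>auto intro: measurable_completion elim: AE_mp\<close>)
  then have g_int: "integrable lborel g"
    by (simp add: integrable_completion)
  have "(LINT u|lborel. g u * iexp (t * u)) = mellin f (complex_of_real \<sigma> + \<i> * complex_of_real t)" for t
  proof -
    have "(LINT u|lborel. g u * iexp (t * u)) = (LINT u|lebesgue. g u * iexp (t * u))"
      by (rule integral_completion[symmetric]) simp
    also have "\<dots> = (LINT u|lebesgue. exp_pullback \<sigma> f u * iexp (t * u))"
      using g_ae' by (intro integral_cong_AE borel_measurable_integrable[OF pullback(1)])
        (auto intro: measurable_completion elim!: AE_mp)
    finally show ?thesis
      by (simp only: pullback(2))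
  qed
  then show ?thesis
    using that[OF g_meas g_int g_bound g_ae']
    by (simp add: mellin_line_integrand_def mellin_measure_line_eq_fourier[OF sets_mu])
qed

lemma tendsto_fourier_product_gaussian_smoothing:
  fixes g :: "real \<Rightarrow> complex" and \<rho> :: "real measure" and \<phi> :: "real \<Rightarrow> real"
  assumes g_meas[measurable]: "g \<in> borel_measurable borel" and g_int: "integrable lborel g"
    and sets_rho[measurable_cong]: "sets \<rho> = sets borel" and fin: "finite_measure \<rho>"
    and phi_meas[measurable]: "\<phi> \<in> borel_measurable borel"
    and lim: "((\<lambda>A. LINT t:{-A..A}|lborel.
                (LINT u|lborel. g u * iexp (t * u)) * (LINT y|\<rho>. iexp (-(t * \<phi> y)))) \<longlongrightarrow> L) at_top"
  shows "((\<lambda>T. complex_of_real (2 * pi) * (LINT y|\<rho>. gaussian_smoothing T g (\<phi> y))) \<longlongrightarrow> L) at_top"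
proof -
  interpret \<rho>: finite_measure \<rho> by (rule fin)
  define h where "h t = (LINT u|lborel. g u * iexp (t * u)) * (LINT y|\<rho>. iexp (-(t * \<phi> y)))" for t
  have "(\<lambda>t. LINT u|lborel. g u * iexp (t * u)) \<in> borel_measurable borel"
    by (rule lborel.borel_measurable_lebesgue_integral) simp
  moreover have "(\<lambda>t. LINT y|\<rho>. iexp (-(t * \<phi> y))) \<in> borel_measurable borel"
    by (rule \<rho>.borel_measurable_lebesgue_integral) simp
  ultimately have h_meas: "h \<in> borel_measurable borel"
    unfolding h_def by (rule borel_measurable_times)
  have h_bound: "norm (h t) \<le> (LINT u|lborel. norm (g u)) * measure \<rho> (space \<rho>)" for t
  proof -
    have "norm (LINT u|lborel. g u * iexp (t * u)) \<le> (LINT u|lborel. norm (g u))"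
      using integral_norm_bound[of lborel "\<lambda>u. g u * iexp (t * u)"] by (simp add: norm_mult)
    moreover have "norm (LINT y|\<rho>. iexp (-(t * \<phi> y))) \<le> measure \<rho> (space \<rho>)"
      using integral_norm_bound[of \<rho> "\<lambda>y. iexp (-(t * \<phi> y))"] by (simp add: norm_exp_i_times)
    ultimately show ?thesis
      unfolding h_def norm_mult by (intro mult_mono) auto
  qed
  have "((\<lambda>T. LINT t|lborel. exp (-((t/T)^2)/2) *\<^sub>R h t) \<longlongrightarrow> L) at_top"
    using h_meas h_bound lim unfolding h_def by (rule tendsto_gaussian_weighted_integral)
  then show ?thesis
  proof (rule Lim_transform_eventually)
    show "\<forall>\<^sub>F T in at_top. (LINT t|lborel. exp (-((t/T)^2)/2) *\<^sub>R h t)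
        = complex_of_real (2 * pi) * (LINT y|\<rho>. gaussian_smoothing T g (\<phi> y))"
      using eventually_gt_at_top[of "0::real"] unfolding h_def
      by eventually_elim (rule gaussian_weighted_fourier_product[OF g_meas g_int _ sets_rho fin phi_meas])
  qed
qed

lemma tendsto_powr_weighted_gaussian_smoothing:
  fixes f g :: "real \<Rightarrow> complex"
  assumes sets_mu[measurable_cong]: "sets \<mu> = sets borel" and mu_pos: "emeasure \<mu> {..0} = 0"
    and mu_int: "(\<integral>\<^sup>+ x. ennreal (indicator {0<..} x * x powr (- \<sigma>)) \<partial>\<mu>) < \<infinity>"
    and f_bound: "\<And>x. 0 < x \<Longrightarrow> norm (complex_of_real (x powr \<sigma>) * f x) \<le> C"
    and cont_ae: "AE x in \<mu>. isCont f x"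
    and g_meas[measurable]: "g \<in> borel_measurable borel" and g_bound: "\<And>u. norm (g u) \<le> C"
    and g_ae: "AE u in lebesgue. g u = exp_pullback \<sigma> f u"
  shows "integrable (completion \<mu>) f"
    and "((\<lambda>T. LINT y|powr_weighted \<mu> \<sigma>. gaussian_smoothing T g (ln y))
           \<longlongrightarrow> integral\<^sup>L (completion \<mu>) f) at_top"
proof -
  define p where "p y = indicator {0<..} y * y powr (- \<sigma>)" for y :: real
  have p_meas[measurable]: "p \<in> borel_measurable borel" unfolding p_def by measurable
  have p_nonneg: "0 \<le> p y" for y by (simp add: p_def)
  have "integrable \<mu> p"
  proof (rule integrableI_bounded)
    have "(\<integral>\<^sup>+ y. ennreal (norm (p y)) \<partial>\<mu>) = (\<integral>\<^sup>+ y. ennreal (indicator {0<..} y * y powr (- \<sigma>)) \<partial>\<mu>)"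
      by (simp add: p_def p_nonneg)
    with mu_int show "(\<integral>\<^sup>+ y. ennreal (norm (p y)) \<partial>\<mu>) < \<infinity>" by simp
  qed simp
  then have pC_int: "integrable (completion \<mu>) (\<lambda>y. p y * C)"
    by (subst integrable_completion) (auto intro: integrable_mult_left)
  define S where "S T y = p y *\<^sub>R gaussian_smoothing T g (ln y)" for T y
  have S_meas: "S T \<in> borel_measurable (completion \<mu>)" for T
  proof -
    have "(\<lambda>v. gaussian_smoothing T g v) \<in> borel_measurable borel"
      unfolding gaussian_smoothing_def by (rule lborel.borel_measurable_lebesgue_integral) simp
    then show ?thesis
      unfolding S_def by (intro measurable_completion) simp
  qed
  have S_bound: "\<forall>\<^sub>F T in at_top. AE y in completion \<mu>. norm (S T y) \<le> p y * C"
    by (intro always_eventually allI AE_I2)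
       (simp add: S_def p_nonneg mult_left_mono gaussian_smoothing_bound[OF g_meas g_bound])
  have "{..0} \<in> null_sets \<mu>"
    using mu_pos sets_mu by (simp add: null_sets_def)
  then have "AE y in \<mu>. 0 < y"
    by (rule AE_not_in[THEN AE_mp]) (auto intro!: AE_I2)
  then have S_lim: "AE y in \<mu>. ((\<lambda>T. S T y) \<longlongrightarrow> f y) at_top"
    using cont_ae
  proof eventually_elim
    case (elim y)
    have cont: "isCont (exp_pullback \<sigma> f) (ln y)"
      unfolding exp_pullback_def using elim
      by (intro continuous_intros isCont_o2[where f=exp and g=f]) auto
    have "((\<lambda>T. gaussian_smoothing T g (ln y)) \<longlongrightarrow> exp_pullback \<sigma> f (ln y)) at_top"
      by (rule tendsto_gaussian_smoothing[OF g_meas g_ae norm_exp_pullback_le[OF f_bound] cont])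
    then have "((\<lambda>T. S T y) \<longlongrightarrow> p y *\<^sub>R exp_pullback \<sigma> f (ln y)) at_top"
      unfolding S_def by (intro tendsto_scaleR tendsto_const)
    moreover have "p y *\<^sub>R exp_pullback \<sigma> f (ln y) = f y"
    proof -
      have "complex_of_real (y powr (- \<sigma>)) * complex_of_real (y powr \<sigma>) = 1"
        using elim by (simp add: powr_minus flip: of_real_mult)
      moreover have "p y *\<^sub>R exp_pullback \<sigma> f (ln y)
          = (complex_of_real (y powr (- \<sigma>)) * complex_of_real (y powr \<sigma>)) * f y"
        using elim by (simp add: p_def exp_pullback_ln scaleR_conv_of_real mult.assoc)
      ultimately show ?thesis by simp
    qed
    ultimately show ?case by simp
  qed
  have f_meas: "f \<in> borel_measurable (completion \<mu>)"
  proof (rule borel_measurable_completion_AE_eq)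
    show "(\<lambda>y. lim (\<lambda>n. S (real n) y)) \<in> borel_measurable (completion \<mu>)"
      using S_meas by (rule borel_measurable_lim_metric)
    show "AE y in \<mu>. f y = lim (\<lambda>n. S (real n) y)"
      using S_lim
    proof eventually_elim
      case (elim y)
      have "(\<lambda>n. S (real n) y) \<longlonglongrightarrow> f y"
        using elim filterlim_real_sequentially by (rule filterlim_compose)
      then show ?case by (simp add: limI)
    qed
  qed
  note dominated = f_meas S_meas pC_int AE_completion[OF S_lim] S_bound
  show "integrable (completion \<mu>) f"
    by (rule integrable_dominated_convergence_at_top[OF dominated])
  have "(LINT y|powr_weighted \<mu> \<sigma>. gaussian_smoothing T g (ln y)) = (LINT y|completion \<mu>. S T y)" for T
  proof -
    have "(LINT y|powr_weighted \<mu> \<sigma>. gaussian_smoothing T g (ln y)) = (LINT y|\<mu>. S T y)"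
      unfolding powr_weighted_def S_def p_def[symmetric]
      by (rule integral_density) (auto simp: p_nonneg gaussian_smoothing_def)
    also have "\<dots> = (LINT y|completion \<mu>. S T y)"
      by (rule integral_completion[symmetric]) (simp add: S_def gaussian_smoothing_def)
    finally show ?thesis .
  qed
  then show "((\<lambda>T. LINT y|powr_weighted \<mu> \<sigma>. gaussian_smoothing T g (ln y))
      \<longlongrightarrow> integral\<^sup>L (completion \<mu>) f) at_top"
    using integral_dominated_convergence_at_top[OF dominated] by simp
qed

theorem lemma10p1:
  fixes f :: "real \<Rightarrow> complex" and \<mu> :: "real measure" and \<sigma> :: real and L :: complex
  assumes sets_mu: "sets \<mu> = sets borel"
    and mu_pos: "emeasure \<mu> {..0} = 0"
    and loc_int: "\<And>a b. 0 < a \<Longrightarrow> set_integrable lebesgue {a..b} f"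
    and f_int: "(\<integral>\<^sup>+ x. ennreal (indicator {0<..} x * (x powr (\<sigma> - 1) * norm (f x))) \<partial>lebesgue) < \<infinity>"
    and mu_int: "(\<integral>\<^sup>+ x. ennreal (indicator {0<..} x * x powr (- \<sigma>)) \<partial>\<mu>) < \<infinity>"
    and line_loc_int: "\<And>A. set_integrable lborel {-A..A} (mellin_line_integrand f \<mu> \<sigma>)"
    and line_conv: "((\<lambda>A. LINT t:{-A..A}|lborel. mellin_line_integrand f \<mu> \<sigma> t) \<longlongrightarrow> L) at_top"
    and bounded: "\<exists>C. \<forall>x>0. norm (complex_of_real (x powr \<sigma>) * f x) \<le> C"
    and cont_ae: "AE x in \<mu>. isCont f x"
  shows "integrable (completion \<mu>) f \<and>
         integral\<^sup>L (completion \<mu>) f = L / (2 * complex_of_real pi * \<i>)"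
proof -
  obtain C where f_bound: "\<And>x. 0 < x \<Longrightarrow> norm (complex_of_real (x powr \<sigma>) * f x) \<le> C"
    using bounded by blast
  obtain g where g_meas: "g \<in> borel_measurable borel" and g_int: "integrable lborel g"
    and g_bound: "\<And>u. norm (g u) \<le> C" and g_ae: "AE u in lebesgue. g u = exp_pullback \<sigma> f u"
    and line_eq: "\<And>t. mellin_line_integrand f \<mu> \<sigma> t
        = \<i> * ((LINT u|lborel. g u * iexp (t * u)) * (LINT y|powr_weighted \<mu> \<sigma>. iexp (-(t * ln y))))"
    using mellin_line_integrand_fourier_representation[OF sets_mu loc_int f_int f_bound] by blast
  have "((\<lambda>A. LINT t:{-A..A}|lborel. (LINT u|lborel. g u * iexp (t * u))
      * (LINT y|powr_weighted \<mu> \<sigma>. iexp (-(t * ln y)))) \<longlongrightarrow> -\<i> * L) at_top"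
    using tendsto_mult_left[OF line_conv, of "-\<i>"] by (simp add: line_eq)
  then have "((\<lambda>T. complex_of_real (2 * pi) * (LINT y|powr_weighted \<mu> \<sigma>. gaussian_smoothing T g (ln y)))
      \<longlongrightarrow> -\<i> * L) at_top"
    using finite_measure_powr_weighted[OF sets_mu mu_int] sets_mu g_meas g_int
    by (intro tendsto_fourier_product_gaussian_smoothing) auto
  moreover note smoothing_lim = tendsto_powr_weighted_gaussian_smoothing
    [OF sets_mu mu_pos mu_int f_bound cont_ae g_meas g_bound g_ae]
  ultimately have "complex_of_real (2 * pi) * integral\<^sup>L (completion \<mu>) f = -\<i> * L"
    using tendsto_unique[OF _ tendsto_mult_left[OF smoothing_lim(2)]] by force
  then show ?thesis
    using smoothing_lim(1) by (auto simp: field_simps)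
qed

end
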